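(* For $k=1,2$, the map $\mathcal{A}_k$ is one-to-one on $\mathfrak{M}_L^k(\mathbb{R}^d)$: if $\nu,\nu'\in\mathfrak{M}_L^k(\mathbb{R}^d)$ and $\mathcal{A}_k(\nu)=\mathcal{A}_k(\nu')$, then $\nu=\nu'$.
   Context: A Lévy measure on $\mathbb{R}^d$ is a measure $\nu$ with $\nu(\{0\})=0$ and $\int(1\wedge|x|^2)\nu(\mathrm{d}x)<\infty$; their class is $\mathfrak{M}_L^2(\mathbb{R}^d)$, and $\mathfrak{M}_L^1(\mathbb{R}^d)$ is the class of Lévy measures with $\int(1\wedge|x|)\nu(\mathrm{d}x)<\infty$. For $s>0$ set $a_1(r;s)=2\pi^{-1}(s-r^2)^{-1/2}$ for $0<r<s^{1/2}$ and $0$ otherwise; $a_2(r;s)=2\pi^{-1}(s^2-r^2)^{-1/2}$ for $0<r<s$ and $0$ otherwise. For $k=1,2$, $\mathcal{A}_k(\nu)(B)=\int_{\mathbb{R}^d\setminus\{0\}}\nu(\mathrm{d}x)\int_0^\infty a_k(r;|x|)1_B(rx/|x|)\,\mathrm{d}r$, $B$ Borel. *)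

theory Defs
  imports "HOL-Analysis.Analysis"
begin

definition levy_measure_class :: "nat \<Rightarrow> 'a::euclidean_space measure \<Rightarrow> bool" where
  "levy_measure_class k \<nu> \<longleftrightarrow>
     sets \<nu> = sets borel \<and> emeasure \<nu> {0} = 0 \<and>
     (\<integral>\<^sup>+ x. ennreal (min 1 (norm x ^ k)) \<partial>\<nu>) < \<infinity>"

definition kernel_a :: "nat \<Rightarrow> real \<Rightarrow> real \<Rightarrow> real" where
  "kernel_a k r s =
     (if k = 1 then (if 0 < r \<and> r < sqrt s then 2 / pi / sqrt (s - r\<^sup>2) else 0)
      else (if 0 < r \<and> r < s then 2 / pi / sqrt (s\<^sup>2 - r\<^sup>2) else 0))"

definition transform_A :: "nat \<Rightarrow> 'a::euclidean_space measure \<Rightarrow> 'a set \<Rightarrow> ennreal" where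
  "transform_A k \<nu> B =
     (\<integral>\<^sup>+ x. indicator (UNIV - {0}) x *
        (\<integral>\<^sup>+ r. indicator {0<..} r * ennreal (kernel_a k r (norm x)) *
                 indicator B (r *\<^sub>R (x /\<^sub>R norm x)) \<partial>lborel) \<partial>\<nu>)"

end

theory Submission
  imports Defs
begin

text \<open>
  Fix a direction set \<open>S\<close> on the unit sphere and \<open>t > 0\<close>. Integrating \<open>\<A>\<^sub>k(\<nu>)\<close> against
  \<open>y \<mapsto> 1\<^sub>S(y/|y|) w(|y|)\<close> with \<open>w(r) = r / \<surd>(r\<^sup>2 - t\<^sup>k)\<close> for \<open>r\<^sup>2 > t\<^sup>k\<close> gives
  \<open>\<nu>{x. x/|x| \<in> S, |x| > t}\<close>, because \<open>\<integral> a\<^sub>k(r;s) w(r) dr\<close> equals 1 for \<open>t < s\<close> and 0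
  otherwise (an arcsine integral). So \<open>\<A>\<^sub>k(\<nu>)\<close> determines \<open>\<nu>\<close> on these truncated cones,
  which form an intersection-stable generator of the Borel sets; the Levy condition
  makes \<open>\<nu>\<close> finite on the exhausting cones \<open>|x| > 1/n\<close> (the origin being \<open>\<nu>\<close>-null),
  and uniqueness of measures on a generator finishes the proof.
\<close>

definition kernel_scale :: "nat \<Rightarrow> real \<Rightarrow> real" where
  "kernel_scale k s = (if k = 1 then s else s\<^sup>2)"

definition abel_weight :: "real \<Rightarrow> real \<Rightarrow> real" where
  "abel_weight \<tau> r = (if \<tau> < r\<^sup>2 then r / sqrt (r\<^sup>2 - \<tau>) else 0)"

lemma abel_weight_borel_measurable [measurable]: "abel_weight \<tau> \<in> borel_measurable borel"
  unfolding abel_weight_def by measurable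

lemma kernel_a_borel_measurable [measurable]:
  assumes [measurable]: "f \<in> borel_measurable M" "g \<in> borel_measurable M"
  shows "(\<lambda>x. kernel_a k (f x) (g x)) \<in> borel_measurable M"
  unfolding kernel_a_def by measurable

lemma arcsin_quadratic_has_real_derivative:
  fixes \<tau> \<sigma> x :: real
  assumes "\<tau> < x\<^sup>2" "x\<^sup>2 < \<sigma>"
  shows "((\<lambda>r. arcsin ((2 * r\<^sup>2 - \<sigma> - \<tau>) / (\<sigma> - \<tau>)) / pi) has_real_derivative
           2 / pi * x / (sqrt (\<sigma> - x\<^sup>2) * sqrt (x\<^sup>2 - \<tau>))) (at x)"
proof -
  have lt: "\<tau> < \<sigma>" using assms by linarith
  define v where "v = (2 * x\<^sup>2 - \<sigma> - \<tau>) / (\<sigma> - \<tau>)"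
  have v: "-1 < v" "v < 1" using assms by (auto simp: v_def field_simps)
  have "1 - v\<^sup>2 = ((\<sigma> - \<tau>)\<^sup>2 - (2 * x\<^sup>2 - \<sigma> - \<tau>)\<^sup>2) / (\<sigma> - \<tau>)\<^sup>2"
    using assms unfolding v_def power_divide by (simp add: diff_divide_distrib)
  also have "\<dots> = 2\<^sup>2 * ((\<sigma> - x\<^sup>2) * (x\<^sup>2 - \<tau>)) / (\<sigma> - \<tau>)\<^sup>2"
    by (simp add: power2_eq_square algebra_simps)
  finally have "sqrt (1 - v\<^sup>2) = 2 * (sqrt (\<sigma> - x\<^sup>2) * sqrt (x\<^sup>2 - \<tau>)) / (\<sigma> - \<tau>)"
    using assms lt by (simp add: real_sqrt_divide real_sqrt_mult)
  moreover have "sqrt (\<sigma> - x\<^sup>2) > 0" "sqrt (x\<^sup>2 - \<tau>) > 0" using assms by auto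
  moreover have "((\<lambda>r. (2 * r\<^sup>2 - \<sigma> - \<tau>) / (\<sigma> - \<tau>)) has_real_derivative 2 * (2 * x) / (\<sigma> - \<tau>)) (at x)"
    using lt by (auto intro!: derivative_eq_intros)
  from DERIV_cdivide[OF DERIV_chain2[OF DERIV_arcsin[OF v[unfolded v_def]] this]]
  have "((\<lambda>r. arcsin ((2 * r\<^sup>2 - \<sigma> - \<tau>) / (\<sigma> - \<tau>)) / pi) has_real_derivative
          inverse (sqrt (1 - v\<^sup>2)) * (2 * (2 * x) / (\<sigma> - \<tau>)) / pi) (at x)"
    unfolding v_def .
  ultimately show ?thesis using assms lt by (simp add: field_simps)
qed

text \<open>After substituting \<open>u = r\<^sup>2\<close> this is the arcsine law on \<open>[\<tau>, \<sigma>]\<close>;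
  the antiderivative comes from \<open>arcsin\<close> composed with the affine map \<open>[\<tau>, \<sigma>] \<rightarrow> [-1, 1]\<close>.\<close>

lemma nn_integral_arcsine_kernel:
  fixes \<tau> \<sigma> :: real
  assumes "0 \<le> \<tau>" "\<tau> < \<sigma>"
  shows "(\<integral>\<^sup>+ r. indicator {sqrt \<tau><..<sqrt \<sigma>} r *
             ennreal (2 / pi * r / (sqrt (\<sigma> - r\<^sup>2) * sqrt (r\<^sup>2 - \<tau>))) \<partial>lborel) = 1"
proof -
  define f where "f r = 2 / pi * r / (sqrt (\<sigma> - r\<^sup>2) * sqrt (r\<^sup>2 - \<tau>))" for r :: real
  define F where "F r = arcsin ((2 * r\<^sup>2 - \<sigma> - \<tau>) / (\<sigma> - \<tau>)) / pi" for r :: real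
  have ab: "sqrt \<tau> < sqrt \<sigma>" using assms by simp
  have squares: "0 < r \<and> \<tau> < r\<^sup>2 \<and> r\<^sup>2 < \<sigma>" if "r \<in> {sqrt \<tau><..<sqrt \<sigma>}" for r
  proof -
    have "0 < r" using that real_sqrt_ge_zero[OF assms(1)] by (meson greaterThanLessThan_iff le_less_trans)
    then show ?thesis using that by (metis greaterThanLessThan_iff abs_of_pos real_sqrt_abs real_sqrt_less_iff)
  qed
  have F_cont: "continuous_on {sqrt \<tau>..sqrt \<sigma>} F"
    unfolding F_def
  proof (intro continuous_intros ballI)
    fix r assume r: "r \<in> {sqrt \<tau>..sqrt \<sigma>}"
    have "\<tau> \<le> r\<^sup>2" "r\<^sup>2 \<le> \<sigma>"
    proof -
      have "0 \<le> r" using r real_sqrt_ge_zero[OF assms(1)] by (meson atLeastAtMost_iff order_trans)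
      then show "\<tau> \<le> r\<^sup>2" "r\<^sup>2 \<le> \<sigma>" using r
        by (metis atLeastAtMost_iff abs_of_nonneg real_sqrt_abs real_sqrt_le_iff)+
    qed
    then show "-1 \<le> (2 * r\<^sup>2 - \<sigma> - \<tau>) / (\<sigma> - \<tau>) \<and> (2 * r\<^sup>2 - \<sigma> - \<tau>) / (\<sigma> - \<tau>) \<le> 1"
      using assms by (auto simp: field_simps)
  qed (use assms in auto)
  have "((F \<circ> real_of_ereal) \<longlongrightarrow> F (sqrt \<tau>)) (at_right (ereal (sqrt \<tau>)))"
    unfolding ereal_tendsto_simps using continuous_on_Icc_at_rightD[OF F_cont ab] by simp
  moreover have "(2 * (sqrt \<tau>)\<^sup>2 - \<sigma> - \<tau>) / (\<sigma> - \<tau>) = -1"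
    using assms by (simp add: field_simps)
  then have "F (sqrt \<tau>) = -1/2"
    by (simp add: F_def)
  moreover have "((F \<circ> real_of_ereal) \<longlongrightarrow> F (sqrt \<sigma>)) (at_left (ereal (sqrt \<sigma>)))"
    unfolding ereal_tendsto_simps using continuous_on_Icc_at_leftD[OF F_cont ab] by simp
  moreover have "F (sqrt \<sigma>) = 1/2"
    using assms by (simp add: F_def)
  moreover have f: "DERIV F r :> f r" "isCont f r" "0 \<le> f r" if "r \<in> {sqrt \<tau><..<sqrt \<sigma>}" for r
    using squares[OF that] arcsin_quadratic_has_real_derivative[of \<tau> r \<sigma>]
    unfolding F_def[abs_def] f_def[abs_def] by (auto intro!: continuous_intros)
  ultimately have "set_integrable lborel (einterval (sqrt \<tau>) (sqrt \<sigma>)) f"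
    and "(LBINT r=ereal (sqrt \<tau>)..ereal (sqrt \<sigma>). f r) = 1/2 - -1/2"
    using interval_integral_FTC_nonneg[of "ereal (sqrt \<tau>)" "ereal (sqrt \<sigma>)" F f "-1/2" "1/2"] ab
    by auto
  moreover have "einterval (ereal (sqrt \<tau>)) (ereal (sqrt \<sigma>)) = {sqrt \<tau><..<sqrt \<sigma>}"
    by (auto simp: einterval_def)
  ultimately have "set_integrable lborel {sqrt \<tau><..<sqrt \<sigma>} f"
    and "(LINT r|lborel. indicator {sqrt \<tau><..<sqrt \<sigma>} r * f r) = 1"
    using ab by (simp_all add: interval_lebesgue_integral_def set_lebesgue_integral_def)
  moreover have "0 \<le> indicator {sqrt \<tau><..<sqrt \<sigma>} r * f r" for r
    using f(3) by (simp add: indicator_def)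
  ultimately show ?thesis
    unfolding f_def[symmetric] indicator_mult_ennreal
    by (subst nn_integral_eq_integral) (auto simp: set_integrable_def)
qed

lemma kernel_a_eq_kernel_scale:
  assumes "0 < r" "0 < s"
  shows "kernel_a k r s =
    (if r\<^sup>2 < kernel_scale k s then 2 / pi / sqrt (kernel_scale k s - r\<^sup>2) else 0)"
proof -
  have "r < sqrt s \<longleftrightarrow> r\<^sup>2 < s"
    using assms(1) by (metis abs_of_pos real_sqrt_abs real_sqrt_less_iff)
  moreover have "r < s \<longleftrightarrow> r\<^sup>2 < s\<^sup>2"
    using assms by (auto intro: power_strict_mono dest: power_less_imp_less_base)
  ultimately show ?thesis using assms by (simp add: kernel_a_def kernel_scale_def)
qed

lemma kernel_scale_less_iff:
  assumes "0 < t" "0 < s"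
  shows "kernel_scale k t < kernel_scale k s \<longleftrightarrow> t < s"
  using assms by (auto simp: kernel_scale_def power_strict_mono dest: power_less_imp_less_base)

lemma nn_integral_kernel_a_abel_weight:
  assumes "0 < t" "0 < s"
  shows "(\<integral>\<^sup>+ r. indicator {0<..} r * ennreal (kernel_a k r s) *
             ennreal (abel_weight (kernel_scale k t) r) \<partial>lborel) = (if t < s then 1 else 0)"
proof -
  define \<tau> where "\<tau> = kernel_scale k t"
  define \<sigma> where "\<sigma> = kernel_scale k s"
  have "0 < \<tau>" using assms by (simp add: \<tau>_def kernel_scale_def)
  have "indicator {0<..} r * ennreal (kernel_a k r s) * ennreal (abel_weight \<tau> r) =
      indicator {sqrt \<tau><..<sqrt \<sigma>} r * ennreal (2 / pi * r / (sqrt (\<sigma> - r\<^sup>2) * sqrt (r\<^sup>2 - \<tau>)))" for r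
  proof (cases "0 < r")
    case True
    then have "r \<in> {sqrt \<tau><..<sqrt \<sigma>} \<longleftrightarrow> \<tau> < r\<^sup>2 \<and> r\<^sup>2 < \<sigma>"
      using \<open>0 < \<tau>\<close> by (metis greaterThanLessThan_iff abs_of_pos real_sqrt_abs real_sqrt_less_iff)
    then show ?thesis
      using True assms
      by (cases "r \<in> {sqrt \<tau><..<sqrt \<sigma>}")
        (simp_all add: kernel_a_eq_kernel_scale abel_weight_def \<sigma>_def ennreal_mult'[symmetric])
  next
    case False
    then have "r \<notin> {sqrt \<tau><..<sqrt \<sigma>}" using \<open>0 < \<tau>\<close> by (auto intro: less_trans[OF real_sqrt_gt_zero])
    then show ?thesis using False by simp
  qed
  moreover have "\<tau> < \<sigma> \<longleftrightarrow> t < s" using assms by (simp add: \<tau>_def \<sigma>_def kernel_scale_less_iff)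
  moreover have "{sqrt \<tau><..<sqrt \<sigma>} = {}" if "\<not> \<tau> < \<sigma>" using that by auto
  ultimately show ?thesis
    using nn_integral_arcsine_kernel[of \<tau> \<sigma>] \<open>0 < \<tau>\<close> by (simp add: \<tau>_def[symmetric])
qed

text \<open>The origin is admitted whenever \<open>sgn 0 = 0\<close> lies in \<open>S\<close>, so that the cones with
  \<open>S = UNIV\<close> exhaust the space and \<open>{0}\<close> is a countable intersection of them.\<close>

definition truncated_cone :: "'a::real_normed_vector set \<Rightarrow> real \<Rightarrow> 'a set" where
  "truncated_cone S t = {x. sgn x \<in> S \<and> (x = 0 \<or> t < norm x)}"

definition truncated_cones :: "'a::euclidean_space set set" where
  "truncated_cones = {truncated_cone S t | S t. S \<in> sets borel \<and> 0 < t}"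

lemma truncated_cone_borel [measurable]:
  fixes S :: "'a::euclidean_space set"
  assumes [measurable]: "S \<in> sets borel"
  shows "truncated_cone S t \<in> sets borel"
proof -
  have "truncated_cone S t = {x. sgn x \<in> S \<and> (norm x = 0 \<or> t < norm x)}"
    by (simp add: truncated_cone_def)
  also have "\<dots> \<in> sets borel" by measurable
  finally show ?thesis .
qed

lemma Int_stable_truncated_cones: "Int_stable truncated_cones"
proof (rule Int_stableI)
  fix A B :: "'a set" assume "A \<in> truncated_cones" "B \<in> truncated_cones"
  then obtain S t S' t' where "A = truncated_cone S t" "B = truncated_cone S' t'"
    and "S \<in> sets borel" "S' \<in> sets borel" "0 < t" "0 < t'"
    unfolding truncated_cones_def by blast
  moreover have "truncated_cone S t \<inter> truncated_cone S' t' = truncated_cone (S \<inter> S') (max t t')"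
    by (auto simp: truncated_cone_def)
  ultimately show "A \<inter> B \<in> truncated_cones"
    unfolding truncated_cones_def by (intro CollectI exI[of _ "S \<inter> S'"] exI[of _ "max t t'"]) auto
qed

lemma vimage_sgn_eq_UN_truncated_cone:
  "sgn -` S = (\<Union>n. truncated_cone S (1 / Suc n))"
proof (intro set_eqI iffI)
  fix x assume x: "x \<in> sgn -` S"
  show "x \<in> (\<Union>n. truncated_cone S (1 / Suc n))"
  proof (cases "x = 0")
    case False
    then obtain n where "1 / Suc n < norm x"
      by (metis nat_approx_posE zero_less_norm_iff)
    with x show ?thesis by (auto simp: truncated_cone_def)
  qed (use x in \<open>auto simp: truncated_cone_def\<close>)
qed (auto simp: truncated_cone_def)

lemma norm_greater_eq_UN_truncated_cone:
  assumes "0 \<le> t"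
  shows "{x. t < norm x} = (\<Union>n. truncated_cone UNIV (t + 1 / Suc n)) - {0}"
proof (intro set_eqI iffI)
  fix x assume "x \<in> {x. t < norm x}"
  then obtain n where n: "1 / Suc n < norm x - t"
    by (metis diff_gt_0_iff_gt mem_Collect_eq nat_approx_posE)
  have "0 < 1 / real (Suc n)" by simp
  then have "t + 1 / Suc n < norm x" "0 < norm x" using n assms by linarith+
  then have "x \<in> truncated_cone UNIV (t + 1 / Suc n)" "x \<noteq> 0"
    by (auto simp: truncated_cone_def)
  then show "x \<in> (\<Union>n. truncated_cone UNIV (t + 1 / Suc n)) - {0}" by blast
next
  fix x assume "x \<in> (\<Union>n. truncated_cone UNIV (t + 1 / Suc n)) - {0}"
  then obtain n where "t + 1 / Suc n < norm x" by (auto simp: truncated_cone_def)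
  moreover have "0 < 1 / real (Suc n)" by simp
  ultimately have "t < norm x" by linarith
  then show "x \<in> {x. t < norm x}" by simp
qed

lemma singleton_zero_eq_INT_truncated_cone:
  "{0} = (\<Inter>n. truncated_cone UNIV (real (Suc n)))"
proof (intro set_eqI iffI)
  fix x assume x: "x \<in> (\<Inter>n. truncated_cone UNIV (real (Suc n)))"
  obtain n where "norm x \<le> real n" using real_arch_simple by blast
  moreover from x have "x = 0 \<or> real (Suc n) < norm x" by (auto simp: truncated_cone_def)
  ultimately show "x \<in> {0}" by auto
qed (auto simp: truncated_cone_def)

lemma sets_borel_eq_sigma_truncated_cones:
  "sets (borel :: 'a::euclidean_space measure) = sigma_sets UNIV truncated_cones"
proof
  have "truncated_cones \<subseteq> sets (borel :: 'a measure)"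
    by (auto simp: truncated_cones_def)
  from sets.sigma_sets_subset[OF this]
  show "sigma_sets UNIV truncated_cones \<subseteq> sets (borel :: 'a measure)" by simp
next
  define M :: "'a measure" where "M = sigma UNIV truncated_cones"
  have sets_M: "sets M = sigma_sets UNIV truncated_cones" and space_M: "space M = UNIV"
    by (simp_all add: M_def)
  have cone: "truncated_cone S t \<in> sets M" if "S \<in> sets borel" "0 < t" for S t
    unfolding sets_M truncated_cones_def using that by (intro sigma_sets.Basic) blast
  have zero: "{0} \<in> sets M"
    unfolding singleton_zero_eq_INT_truncated_cone
    by (intro sets.countable_INT image_subsetI cone) auto
  have "norm \<in> borel_measurable M"
    unfolding borel_measurable_iff_greater space_M
  proof
    fix t :: real
    show "{x \<in> UNIV. t < norm x} \<in> sets M"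
    proof (cases "t < 0")
      case True
      then have "{x \<in> UNIV. t < norm x} = space M" by (auto simp: space_M intro: less_le_trans)
      then show ?thesis by simp
    next
      case False
      have "{x \<in> UNIV. t < norm x} = (\<Union>n. truncated_cone UNIV (t + 1 / Suc n)) - {0}"
        using norm_greater_eq_UN_truncated_cone[of t] False by simp
      also have "\<dots> \<in> sets M"
        using False by (intro sets.Diff sets.countable_UN image_subsetI cone zero add_nonneg_pos) auto
      finally show ?thesis .
    qed
  qed
  moreover have "sgn \<in> M \<rightarrow>\<^sub>M (borel :: 'a measure)"
  proof (rule measurableI)
    fix S :: "'a set" assume "S \<in> sets borel"
    then show "sgn -` S \<inter> space M \<in> sets M"
      unfolding space_M vimage_sgn_eq_UN_truncated_cone Int_UNIV_right
      by (intro sets.countable_UN image_subsetI cone) auto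
  qed simp
  ultimately have "(\<lambda>x. norm x *\<^sub>R sgn x) \<in> M \<rightarrow>\<^sub>M (borel :: 'a measure)"
    by (rule borel_measurable_scaleR)
  moreover have "norm x *\<^sub>R sgn x = x" for x :: 'a
    by (cases "x = 0") (simp_all add: sgn_div_norm)
  ultimately have "id \<in> M \<rightarrow>\<^sub>M (borel :: 'a measure)"
    by (simp add: id_def)
  then show "sets (borel :: 'a measure) \<subseteq> sigma_sets UNIV truncated_cones"
    using measurable_sets[of id M borel] by (auto simp: space_M sets_M)
qed

definition transform_measure :: "nat \<Rightarrow> 'a::euclidean_space measure \<Rightarrow> 'a measure" where
  "transform_measure k \<nu> =
     distr (density (\<nu> \<Otimes>\<^sub>M lborel)
             (\<lambda>(x, r). indicator (UNIV - {0}) x * (indicator {0<..} r * ennreal (kernel_a k r (norm x)))))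
       borel (\<lambda>(x, r). r *\<^sub>R (x /\<^sub>R norm x))"

lemma sets_transform_measure [simp]: "sets (transform_measure k \<nu>) = sets borel"
  by (simp add: transform_measure_def)

lemma nn_integral_transform_measure:
  fixes \<nu> :: "'a::euclidean_space measure"
  assumes "sets \<nu> = sets borel" and [measurable]: "g \<in> borel_measurable borel"
  shows "(\<integral>\<^sup>+ y. g y \<partial>transform_measure k \<nu>) = (\<integral>\<^sup>+ x. indicator (UNIV - {0}) x *
           (\<integral>\<^sup>+ r. indicator {0<..} r * ennreal (kernel_a k r (norm x)) * g (r *\<^sub>R (x /\<^sub>R norm x)) \<partial>lborel) \<partial>\<nu>)"
proof -
  have [measurable_cong]: "sets (\<nu> \<Otimes>\<^sub>M lborel) = sets (borel \<Otimes>\<^sub>M borel)"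
    using assms(1) by (intro sets_pair_measure_cong) auto
  have "(\<integral>\<^sup>+ y. g y \<partial>transform_measure k \<nu>) = (\<integral>\<^sup>+ (x, r). indicator (UNIV - {0}) x *
          (indicator {0<..} r * ennreal (kernel_a k r (norm x))) * g (r *\<^sub>R (x /\<^sub>R norm x)) \<partial>(\<nu> \<Otimes>\<^sub>M lborel))"
    unfolding transform_measure_def
    by (simp add: nn_integral_distr nn_integral_density case_prod_beta')
  also have "\<dots> = (\<integral>\<^sup>+ x. indicator (UNIV - {0}) x *
           (\<integral>\<^sup>+ r. indicator {0<..} r * ennreal (kernel_a k r (norm x)) * g (r *\<^sub>R (x /\<^sub>R norm x)) \<partial>lborel) \<partial>\<nu>)"
    by (subst lborel.nn_integral_fst[symmetric])
       (auto simp: mult.assoc nn_integral_cmult[symmetric] intro!: nn_integral_cong)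
  finally show ?thesis .
qed

lemma emeasure_transform_measure:
  fixes \<nu> :: "'a::euclidean_space measure"
  assumes "sets \<nu> = sets borel" "B \<in> sets borel"
  shows "emeasure (transform_measure k \<nu>) B = transform_A k \<nu> B"
  using nn_integral_transform_measure[OF assms(1), of "indicator B" k] assms(2)
  by (simp add: transform_A_def)

lemma nn_integral_transform_measure_abel_weight:
  fixes \<nu> :: "'a::euclidean_space measure"
  assumes "sets \<nu> = sets borel" and [measurable]: "S \<in> sets borel" and "0 < t"
  shows "(\<integral>\<^sup>+ y. indicator S (sgn y) * ennreal (abel_weight (kernel_scale k t) (norm y)) \<partial>transform_measure k \<nu>)
     = emeasure \<nu> (truncated_cone S t - {0})"
proof -
  have "indicator (UNIV - {0}) x *
          (\<integral>\<^sup>+ r. indicator {0<..} r * ennreal (kernel_a k r (norm x)) *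
             (indicator S (sgn (r *\<^sub>R (x /\<^sub>R norm x))) *
              ennreal (abel_weight (kernel_scale k t) (norm (r *\<^sub>R (x /\<^sub>R norm x))))) \<partial>lborel)
      = indicator (truncated_cone S t - {0}) x" for x :: 'a
  proof (cases "x = 0")
    case False
    have polar: "sgn (r *\<^sub>R (x /\<^sub>R norm x)) = sgn x" if "0 < r" for r
      using that False by (simp add: sgn_div_norm field_simps)
    have "(\<integral>\<^sup>+ r. indicator {0<..} r * ennreal (kernel_a k r (norm x)) *
             (indicator S (sgn (r *\<^sub>R (x /\<^sub>R norm x))) *
              ennreal (abel_weight (kernel_scale k t) (norm (r *\<^sub>R (x /\<^sub>R norm x))))) \<partial>lborel)
        = (\<integral>\<^sup>+ r. indicator S (sgn x) * (indicator {0<..} r * ennreal (kernel_a k r (norm x)) *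
             ennreal (abel_weight (kernel_scale k t) r)) \<partial>lborel)"
      using False by (intro nn_integral_cong) (simp add: indicator_def polar del: scaleR_scaleR)
    also have "\<dots> = indicator S (sgn x) * (if t < norm x then 1 else 0)"
      using False assms(3) by (simp add: nn_integral_cmult nn_integral_kernel_a_abel_weight)
    finally show ?thesis
      using False by (simp add: truncated_cone_def indicator_def)
  qed simp
  then show ?thesis
    using assms by (simp add: nn_integral_transform_measure)
qed

lemma measure_eqI_transform_A:
  fixes \<nu> \<nu>' :: "'a::euclidean_space measure"
  assumes sets: "sets \<nu> = sets borel" "sets \<nu>' = sets borel"
    and null: "emeasure \<nu> {0} = 0" "emeasure \<nu>' {0} = 0"
    and finite: "\<And>t. 0 < t \<Longrightarrow> emeasure \<nu> {x. t < norm x} \<noteq> \<infinity>"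
    and eq: "\<And>B. B \<in> sets borel \<Longrightarrow> transform_A k \<nu> B = transform_A k \<nu>' B"
  shows "\<nu> = \<nu>'"
proof (rule measure_eqI_generator_eq[OF Int_stable_truncated_cones])
  have transform_eq: "transform_measure k \<nu> = transform_measure k \<nu>'"
    by (rule measure_eqI) (simp_all add: emeasure_transform_measure sets eq)
  show "emeasure \<nu> C = emeasure \<nu>' C" if "C \<in> truncated_cones" for C
  proof -
    obtain S t where C: "C = truncated_cone S t" and S: "S \<in> sets borel" and t: "0 < t"
      using \<open>C \<in> truncated_cones\<close> by (auto simp: truncated_cones_def)
    let ?f = "\<lambda>y. indicator S (sgn y) * ennreal (abel_weight (kernel_scale k t) (norm y))"
    have "emeasure \<nu> C = emeasure \<nu> (C - {0})"
      using sets null S by (intro emeasure_Diff_null_set[symmetric]) (auto simp: C null_sets_def)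
    also have "\<dots> = (\<integral>\<^sup>+ y. ?f y \<partial>transform_measure k \<nu>)"
      unfolding C by (rule nn_integral_transform_measure_abel_weight[OF sets(1) S t, symmetric])
    also have "\<dots> = (\<integral>\<^sup>+ y. ?f y \<partial>transform_measure k \<nu>')"
      by (simp only: transform_eq)
    also have "\<dots> = emeasure \<nu>' (C - {0})"
      unfolding C by (rule nn_integral_transform_measure_abel_weight[OF sets(2) S t])
    also have "\<dots> = emeasure \<nu>' C"
      using sets null S by (intro emeasure_Diff_null_set) (auto simp: C null_sets_def)
    finally show ?thesis .
  qed
  show "truncated_cones \<subseteq> Pow UNIV" by simp
  show "sets \<nu> = sigma_sets UNIV truncated_cones" "sets \<nu>' = sigma_sets UNIV truncated_cones"
    by (simp_all add: sets sets_borel_eq_sigma_truncated_cones)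
  show "range (\<lambda>n. truncated_cone UNIV (1 / Suc n)) \<subseteq> truncated_cones"
  proof (rule image_subsetI)
    fix n :: nat
    show "truncated_cone UNIV (1 / Suc n) \<in> truncated_cones"
      unfolding truncated_cones_def by (intro CollectI exI[of _ UNIV] exI[of _ "1 / Suc n"]) simp
  qed
  show "(\<Union>n. truncated_cone UNIV (1 / Suc n)) = UNIV"
    by (metis vimage_UNIV vimage_sgn_eq_UN_truncated_cone)
  fix n :: nat
  have "truncated_cone UNIV (1 / Suc n) \<subseteq> {0} \<union> {x. 1 / Suc n < norm x}"
    by (auto simp: truncated_cone_def)
  then have "emeasure \<nu> (truncated_cone UNIV (1 / Suc n)) \<le> emeasure \<nu> ({0} \<union> {x. 1 / Suc n < norm x})"
    using sets by (intro emeasure_mono) auto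
  also have "\<dots> \<le> emeasure \<nu> {0} + emeasure \<nu> {x. 1 / Suc n < norm x}"
    using sets by (intro emeasure_subadditive) auto
  also have "\<dots> < \<infinity>"
    using null finite[of "1 / Suc n"] by (simp add: less_top)
  finally show "emeasure \<nu> (truncated_cone UNIV (1 / Suc n)) \<noteq> \<infinity>" by simp
qed

lemma levy_measure_class_emeasure_norm_greater_finite:
  fixes \<nu> :: "'a::euclidean_space measure"
  assumes "levy_measure_class k \<nu>" and "0 < t"
  shows "emeasure \<nu> {x. t < norm x} \<noteq> \<infinity>"
proof -
  define c where "c = min 1 (t ^ k)"
  have "0 < c" using assms(2) by (simp add: c_def)
  have sets: "sets \<nu> = sets borel" and finite: "(\<integral>\<^sup>+ x. ennreal (min 1 (norm x ^ k)) \<partial>\<nu>) < \<infinity>"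
    using assms(1) by (auto simp: levy_measure_class_def)
  have "ennreal c * emeasure \<nu> {x. t < norm x} = (\<integral>\<^sup>+ x. ennreal c * indicator {x. t < norm x} x \<partial>\<nu>)"
    using sets by (simp add: nn_integral_cmult_indicator)
  also have "\<dots> \<le> (\<integral>\<^sup>+ x. ennreal (min 1 (norm x ^ k)) \<partial>\<nu>)"
  proof (intro nn_integral_mono)
    fix x :: 'a
    have "t ^ k \<le> norm x ^ k" if "t < norm x"
      using that assms(2) by (intro power_mono) auto
    then show "ennreal c * indicator {x. t < norm x} x \<le> ennreal (min 1 (norm x ^ k))"
      by (auto simp: c_def indicator_def)
  qed
  finally show ?thesis
    using finite \<open>0 < c\<close> by (auto simp: ennreal_mult_eq_top_iff top_unique)
qed

theorem theorem2p9:
  fixes \<nu> \<nu>' :: "'a::euclidean_space measure" and k :: nat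
  assumes "k = 1 \<or> k = 2"
    and "levy_measure_class k \<nu>" and "levy_measure_class k \<nu>'"
    and "\<forall>B \<in> sets borel. transform_A k \<nu> B = transform_A k \<nu>' B"
  shows "\<nu> = \<nu>'"
proof (rule measure_eqI_transform_A)
  show "sets \<nu> = sets borel" "emeasure \<nu> {0} = 0"
    using assms(2) by (simp_all add: levy_measure_class_def)
  show "sets \<nu>' = sets borel" "emeasure \<nu>' {0} = 0"
    using assms(3) by (simp_all add: levy_measure_class_def)
  show "emeasure \<nu> {x. t < norm x} \<noteq> \<infinity>" if "0 < t" for t
    using levy_measure_class_emeasure_norm_greater_finite[OF assms(2) that] .
  show "transform_A k \<nu> B = transform_A k \<nu>' B" if "B \<in> sets borel" for B
    using assms(4) that by blast
qed

end
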